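(* Let $f:\mathbb{R}^n\to\mathbb{R}$ be continuously differentiable and bounded below with $\nabla f$ Lipschitz continuous on $\mathbb{R}^n$, let $s$ be an integer with $0<s<n$, and let $\{\mathbf{x}^k\}$ be the sequence generated by the partial sparse-simplex method. Then any accumulation point $\mathbf{x}^*$ of $\{\mathbf{x}^k\}$ is an $L_2(f)$-stationary point of the problem (P): minimize $f(\mathbf{x})$ subject to $\|\mathbf{x}\|_0\le s$; i.e. $\nabla_i f(\mathbf{x}^* )=0$ for $i\in I_1(\mathbf{x}^* )$ and $|\nabla_i f(\mathbf{x}^* )|\le L_2(f)M_s(\mathbf{x}^* )$ for $i\in I_0(\mathbf{x}^* )$.
   Context: $\|\mathbf{x}\|_0$ is the number of nonzero components, $C_s=\{\mathbf{x}:\|\mathbf{x}\|_0\le s\}$, $I_1(\mathbf{x})=\{i:x_i\neq0\}$, $I_0(\mathbf{x})=\{i:x_i=0\}$, $M_s(\mathbf{x})$ the $s$-th largest absolute value among components of $\mathbf{x}$, $\mathbf{e}_i$ the $i$-th standard basis vector. For $i\neq j$, $\nabla_{i,j}f(\mathbf{x})\in\mathbb{R}^2$ is the vector of the $i$-th and $j$-th partial derivatives, $L_{i,j}(f)$ is a constant with $\|\nabla_{i,j}f(\mathbf{x})-\nabla_{i,j}f(\mathbf{x}+\mathbf{d})\|\le L_{i,j}(f)\|\mathbf{d}\|$ for all $\mathbf{x}$ and all $\mathbf{d}$ with at most two nonzero components, and $L_2(f)=\max_{i\neq j}L_{i,j}(f)$. Partial sparse-simplex method (all one-dimensional minima assumed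 attained): choose $\mathbf{x}^0\in C_s$. At step $k$: if $\|\mathbf{x}^k\|_0<s$, for each $i$ let $t_i\in\operatorname{argmin}_t f(\mathbf{x}^k+t\mathbf{e}_i)$, $f_i=\min_t f(\mathbf{x}^k+t\mathbf{e}_i)$, $i_k\in\operatorname{argmin}_i f_i$; if $f_{i_k}<f(\mathbf{x}^k)$ set $\mathbf{x}^{k+1}=\mathbf{x}^k+t_{i_k}\mathbf{e}_{i_k}$, else stop. If $\|\mathbf{x}^k\|_0=s$: for $i\in I_1(\mathbf{x}^k)$ let $f_i=\min_t f(\mathbf{x}^k+t\mathbf{e}_i)$; let $i_k^1\in\operatorname{argmin}\{f_i:i\in I_1(\mathbf{x}^k)\}$, $i_k^2\in\operatorname{argmax}\{|\nabla_i f(\mathbf{x}^k)|:i\in I_0(\mathbf{x}^k)\}$, $m_k\in\operatorname{argmin}\{|x_i^k|:i\in I_1(\mathbf{x}^k)\}$; let $D_k^1=\min_t f(\mathbf{x}^k+t\mathbf{e}_{i_k^1})$ with minimizer $T_k^1$, and $D_k^2=\min_t f(\mathbf{x}^k-x^k_{m_k}\mathbf{e}_{m_k}+t\mathbf{e}_{i_k^2})$ with minimizer $T_k^2$; if $D_k^1<D_k^2$ set $\mathbf{x}^{k+1}=\mathbf{x}^k+T_k^1\mathbf{e}_{i_k^1}$, else $\mathbf{x}^{k+1}=\mathbf{x}^k-x^k_{m_k}\mathbf{e}_{m_k}+T_k^2\mathbf{e}_{i_k^2}$. *)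

theory Defs
  imports "HOL-Analysis.Analysis" "HOL-Library.Multiset"
begin

text \<open>Vectors in R^n are modelled as real^'n; standard basis vector e_i is axis i 1.\<close>

definition l0norm :: "real^'n \<Rightarrow> nat" where
  "l0norm x = card {i. x $ i \<noteq> 0}"

definition I1 :: "real^'n \<Rightarrow> 'n set" where
  "I1 x = {i. x $ i \<noteq> 0}"

definition I0 :: "real^'n \<Rightarrow> 'n set" where
  "I0 x = {i. x $ i = 0}"

text \<open>M_s(x): the s-th largest absolute value among the components of x
  (counted with multiplicity; s \<ge> 1).\<close>
definition Ms :: "nat \<Rightarrow> real^'n \<Rightarrow> real" where
  "Ms s x = rev (sorted_list_of_multiset (image_mset (\<lambda>i. \<bar>x $ i\<bar>) (mset_set (UNIV :: 'n set)))) ! (s - 1)"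

definition lmin :: "(real^'n \<Rightarrow> real) \<Rightarrow> real^'n \<Rightarrow> 'n \<Rightarrow> real" where
  "lmin f x i = (INF t. f (x + t *\<^sub>R axis i 1))"

definition is_lmin :: "(real^'n \<Rightarrow> real) \<Rightarrow> real^'n \<Rightarrow> 'n \<Rightarrow> real \<Rightarrow> bool" where
  "is_lmin f x i t \<longleftrightarrow> (\<forall>t'. f (x + t *\<^sub>R axis i 1) \<le> f (x + t' *\<^sub>R axis i 1))"

text \<open>When the method stops (case \<open>l0norm x < s\<close> with no improving coordinate),
  the sequence is continued as constant: x' = x.\<close>
definition pss_step :: "(real^'n \<Rightarrow> real) \<Rightarrow> (real^'n \<Rightarrow> real^'n) \<Rightarrow> nat \<Rightarrow> real^'n \<Rightarrow> real^'n \<Rightarrow> bool" where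
  "pss_step f grad s x x' \<longleftrightarrow>
     (l0norm x < s \<and>
        ((\<exists>i t. (\<forall>j. lmin f x i \<le> lmin f x j) \<and> is_lmin f x i t \<and>
                 lmin f x i < f x \<and> x' = x + t *\<^sub>R axis i 1)
         \<or> ((\<exists>i. (\<forall>j. lmin f x i \<le> lmin f x j) \<and> \<not> lmin f x i < f x) \<and> x' = x)))
   \<or> (l0norm x = s \<and>
        (\<exists>i1 i2 m. i1 \<in> I1 x \<and> (\<forall>j\<in>I1 x. lmin f x i1 \<le> lmin f x j) \<and>
           i2 \<in> I0 x \<and> (\<forall>j\<in>I0 x. \<bar>grad x $ j\<bar> \<le> \<bar>grad x $ i2\<bar>) \<and>
           m \<in> I1 x \<and> (\<forall>j\<in>I1 x. \<bar>x $ m\<bar> \<le> \<bar>x $ j\<bar>) \<and>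
           (let y = x - (x $ m) *\<^sub>R axis m 1 in
             (lmin f x i1 < lmin f y i2 \<and>
                (\<exists>T. is_lmin f x i1 T \<and> x' = x + T *\<^sub>R axis i1 1))
           \<or> (\<not> lmin f x i1 < lmin f y i2 \<and>
                (\<exists>T. is_lmin f y i2 T \<and> x' = y + T *\<^sub>R axis i2 1)))))"

definition pss_sequence :: "(real^'n \<Rightarrow> real) \<Rightarrow> (real^'n \<Rightarrow> real^'n) \<Rightarrow> nat \<Rightarrow> (nat \<Rightarrow> real^'n) \<Rightarrow> bool" where
  "pss_sequence f grad s xs \<longleftrightarrow> l0norm (xs 0) \<le> s \<and> (\<forall>k. pss_step f grad s (xs k) (xs (Suc k)))"

definition L2_const :: "(real^'n \<Rightarrow> real^'n) \<Rightarrow> real \<Rightarrow> bool" where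
  "L2_const grad L \<longleftrightarrow> (\<forall>i j x d. i \<noteq> j \<longrightarrow> card {k. d $ k \<noteq> 0} \<le> 2 \<longrightarrow>
      sqrt ((grad x $ i - grad (x + d) $ i)\<^sup>2 + (grad x $ j - grad (x + d) $ j)\<^sup>2) \<le> L * norm d)"

end

theory Submission
  imports Defs
begin

(*
  The block descent lemma  f (x + u e_a + v e_b) \<le> f x + u \<nabla>_a f x + v \<nabla>_b f x + L/2 (u\<^sup>2 + v\<^sup>2)
  shows that each move of the method decreases f at least as much as a gradient step of
  length 1/L along the chosen coordinates.  Hence (\<nabla>_j f(x\<^sup>k))\<^sup>2 \<le> 2L (f(x\<^sup>k) - f(x\<^sup>k\<^sup>+\<^sup>1)) on the
  support, and everywhere while the support is not full; when it is full, comparing with the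
  swap that zeroes the smallest entry x_m gives
  |\<nabla>_i f(x\<^sup>k)| \<le> sqrt (2L (f(x\<^sup>k) - f(x\<^sup>k\<^sup>+\<^sup>1))) + L |x_m|,  with  |x_m| \<le> M_s(x\<^sup>\<star>) + \<parallel>x\<^sup>k - x\<^sup>\<star>\<parallel>.
  As f(x\<^sup>k) decreases and is bounded below, its decrements tend to 0, and passing to the
  limit along a subsequence converging to x\<^sup>\<star> yields both stationarity conditions.
*)

lemma sqrt_sum_squares_cauchy_schwarz:
  fixes p q r w :: real
  shows "p * q + r * w \<le> sqrt (p\<^sup>2 + r\<^sup>2) * sqrt (q\<^sup>2 + w\<^sup>2)"
  using norm_cauchy_schwarz[of "(p, r)" "(q, w)"] by (simp add: norm_Pair)

lemma norm_scaleR_axis_add_scaleR_axis: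
  fixes a b :: "'n::finite"
  assumes "a \<noteq> b"
  shows "norm (u *\<^sub>R axis a 1 + v *\<^sub>R axis b (1::real)) = sqrt (u\<^sup>2 + v\<^sup>2)"
proof -
  have "(norm (u *\<^sub>R axis a 1 + v *\<^sub>R axis b (1::real)))\<^sup>2 = u\<^sup>2 + v\<^sup>2"
    unfolding power2_norm_eq_inner using assms
    by (simp add: inner_add_left inner_add_right inner_axis_axis power2_eq_square)
  then show ?thesis
    by (metis norm_ge_zero real_sqrt_unique)
qed

lemma card_support_scaleR_axis_add_scaleR_axis:
  "card {k. (u *\<^sub>R axis a 1 + v *\<^sub>R axis b (1::real)) $ k \<noteq> 0} \<le> 2"
proof -
  have "card {k. (u *\<^sub>R axis a 1 + v *\<^sub>R axis b (1::real)) $ k \<noteq> 0} \<le> card {a, b}"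
    by (intro card_mono) (auto simp: axis_def)
  also have "\<dots> \<le> 2"
    by (simp add: card_insert_if)
  finally show ?thesis .
qed

lemma has_real_derivative_along_line:
  fixes f :: "'a::real_inner \<Rightarrow> real"
  assumes "\<And>y. (f has_derivative (\<lambda>h. g y \<bullet> h)) (at y)"
  shows "((\<lambda>t. f (x + t *\<^sub>R d)) has_real_derivative g (x + t *\<^sub>R d) \<bullet> d) (at t)"
proof -
  have "((\<lambda>t. x + t *\<^sub>R d) has_derivative (\<lambda>h. h *\<^sub>R d)) (at t)"
    by (auto intro!: derivative_eq_intros)
  from has_derivative_compose[OF this assms]
  show ?thesis
    by (simp add: o_def has_field_derivative_def mult.commute[of _ "g (x + t *\<^sub>R d) \<bullet> d"])
qed

lemma sorted_wrt_ge_nth_lower_bound: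
  fixes xs :: "'a::linorder list"
  assumes "sorted_wrt (\<ge>) xs" and "0 < s" and "s \<le> length (filter (\<lambda>v. c \<le> v) xs)"
  shows "c \<le> xs ! (s - 1)"
  using assms
proof (induction xs arbitrary: s)
  case Nil
  then show ?case by simp
next
  case (Cons x xs)
  show ?case
  proof (cases "s = 1")
    case True
    with Cons.prems(3) have "filter (\<lambda>v. c \<le> v) (x # xs) \<noteq> []"
      by auto
    then obtain v where "v \<in> set (x # xs)" "c \<le> v"
      by (metis filter_empty_conv)
    then show ?thesis
      using Cons.prems(1) True by auto
  next
    case False
    have "s - 1 \<le> length (filter (\<lambda>v. c \<le> v) xs)"
      using Cons.prems(3) by (simp split: if_splits)
    then have "c \<le> xs ! (s - 1 - 1)"
      using Cons.IH[of "s - 1"] Cons.prems(1,2) False by simp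
    then show ?thesis
      using Cons.prems(2) False by (simp add: nth_Cons')
  qed
qed

lemma le_Ms_if_card_ge:
  fixes z :: "real^'n"
  assumes "0 < s" and "s \<le> card S" and "\<forall>j\<in>S. c \<le> \<bar>z $ j\<bar>"
  shows "c \<le> Ms s z"
proof -
  define M where "M = image_mset (\<lambda>i. \<bar>z $ i\<bar>) (mset_set (UNIV :: 'n set))"
  define xs where "xs = rev (sorted_list_of_multiset M)"
  have "card S \<le> card {i. c \<le> \<bar>z $ i\<bar>}"
    using assms(3) by (intro card_mono) auto
  also have "card {i. c \<le> \<bar>z $ i\<bar>} = size (filter_mset (\<lambda>v. c \<le> v) M)"
    unfolding M_def filter_mset_image_mset by simp
  also have "\<dots> = length (filter (\<lambda>v. c \<le> v) xs)"
    unfolding xs_def by (metis mset_filter mset_rev mset_sorted_list_of_multiset size_mset)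
  finally have "s \<le> length (filter (\<lambda>v. c \<le> v) xs)"
    using assms(2) by linarith
  moreover have "sorted_wrt (\<ge>) xs"
    unfolding xs_def sorted_wrt_rev by (metis sorted_sorted_list_of_multiset sorted_wrt_iff_nth_less)
  ultimately have "c \<le> xs ! (s - 1)"
    using assms(1) by (intro sorted_wrt_ge_nth_lower_bound)
  then show ?thesis
    unfolding Ms_def xs_def M_def .
qed

lemma Ms_nonneg:
  fixes z :: "real^'n"
  assumes "0 < s" and "s \<le> CARD('n)"
  shows "0 \<le> Ms s z"
  using le_Ms_if_card_ge[of s UNIV 0 z] assms by simp

lemma abs_le_Ms_if_abs_le_support:
  fixes x z :: "real^'n"
  assumes "0 < s" and "l0norm x = s" and "\<forall>j\<in>I1 x. \<bar>x $ m\<bar> \<le> \<bar>x $ j\<bar>"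
  shows "\<bar>x $ m\<bar> \<le> Ms s z + norm (x - z)"
proof -
  have "\<bar>x $ m\<bar> - norm (x - z) \<le> \<bar>z $ j\<bar>" if "j \<in> I1 x" for j
  proof -
    have "\<bar>(x - z) $ j\<bar> \<le> norm (x - z)"
      by (rule component_le_norm_cart)
    then show ?thesis
      using assms(3) that by auto
  qed
  moreover have "s \<le> card (I1 x)"
    using assms(2) unfolding l0norm_def I1_def by simp
  ultimately have "\<bar>x $ m\<bar> - norm (x - z) \<le> Ms s z"
    using assms(1) by (intro le_Ms_if_card_ge) auto
  then show ?thesis
    by simp
qed

lemma LIMSEQ_imp_diff_Suc_tendsto_0:
  fixes X :: "nat \<Rightarrow> 'a::real_normed_vector"
  assumes "X \<longlonglongrightarrow> l"
  shows "(\<lambda>k. X k - X (Suc k)) \<longlonglongrightarrow> 0"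
  using tendsto_diff[OF assms LIMSEQ_Suc[OF assms]] by simp

locale block_lipschitz_gradient =
  fixes f :: "real^'n \<Rightarrow> real" and grad :: "real^'n \<Rightarrow> real^'n" and L :: real
  assumes has_derivative_f: "\<And>x. (f has_derivative (\<lambda>h. grad x \<bullet> h)) (at x)"
    and L2_const_grad: "L2_const grad L"
    and bdd_below_f: "bdd_below (range f)"
    and two_le_card: "2 \<le> CARD('n)" \<comment> \<open>in dimension 1, \<open>L2_const\<close> constrains nothing\<close>
begin

lemma exists_other_index: "\<exists>b::'n. b \<noteq> a"
proof (rule ccontr)
  assume "\<nexists>b. b \<noteq> a"
  then have "(UNIV :: 'n set) = {a}"
    by auto
  then have "CARD('n) = card {a}"
    by (rule arg_cong)
  with two_le_card show False
    by simp
qed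

lemma descent_two_coords:
  assumes "a \<noteq> b"
  shows "f (x + (u *\<^sub>R axis a 1 + v *\<^sub>R axis b 1))
    \<le> f x + u * grad x $ a + v * grad x $ b + L / 2 * (u\<^sup>2 + v\<^sup>2)"
proof -
  define d where "d = u *\<^sub>R axis a 1 + v *\<^sub>R axis b (1::real)"
  have grad_d: "grad y \<bullet> d = u * grad y $ a + v * grad y $ b" for y
    by (simp add: d_def inner_add_right inner_axis)
  have slope_increase: "grad (x + t *\<^sub>R d) \<bullet> d - grad x \<bullet> d \<le> L * t * (u\<^sup>2 + v\<^sup>2)"
    if "0 \<le> t" for t
  proof -
    let ?p = "grad (x + t *\<^sub>R d) $ a - grad x $ a" and ?q = "grad (x + t *\<^sub>R d) $ b - grad x $ b"
    have "t *\<^sub>R d = (t * u) *\<^sub>R axis a 1 + (t * v) *\<^sub>R axis b 1"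
      by (simp add: d_def algebra_simps)
    then have "card {k. (t *\<^sub>R d) $ k \<noteq> 0} \<le> 2"
      using card_support_scaleR_axis_add_scaleR_axis by metis
    then have "sqrt ((grad x $ a - grad (x + t *\<^sub>R d) $ a)\<^sup>2 + (grad x $ b - grad (x + t *\<^sub>R d) $ b)\<^sup>2)
        \<le> L * norm (t *\<^sub>R d)"
      using L2_const_grad assms unfolding L2_const_def by blast
    then have "sqrt (?p\<^sup>2 + ?q\<^sup>2) \<le> L * norm (t *\<^sub>R d)"
      by (metis power2_commute)
    also have "\<dots> = L * t * sqrt (u\<^sup>2 + v\<^sup>2)"
      using that norm_scaleR_axis_add_scaleR_axis[OF assms] by (simp add: d_def)
    finally have lip: "sqrt (?p\<^sup>2 + ?q\<^sup>2) \<le> L * t * sqrt (u\<^sup>2 + v\<^sup>2)" .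
    have "grad (x + t *\<^sub>R d) \<bullet> d - grad x \<bullet> d = ?p * u + ?q * v"
      by (simp add: grad_d algebra_simps)
    also have "\<dots> \<le> sqrt (?p\<^sup>2 + ?q\<^sup>2) * sqrt (u\<^sup>2 + v\<^sup>2)"
      by (rule sqrt_sum_squares_cauchy_schwarz)
    also have "\<dots> \<le> L * t * sqrt (u\<^sup>2 + v\<^sup>2) * sqrt (u\<^sup>2 + v\<^sup>2)"
      using lip by (intro mult_right_mono) auto
    also have "\<dots> = L * t * (u\<^sup>2 + v\<^sup>2)"
      by simp
    finally show ?thesis .
  qed
  define \<phi> where "\<phi> t = f (x + t *\<^sub>R d) - t * (grad x \<bullet> d) - L / 2 * t\<^sup>2 * (u\<^sup>2 + v\<^sup>2)" for t
  have "(\<phi> has_real_derivative grad (x + t *\<^sub>R d) \<bullet> d - grad x \<bullet> d - L * t * (u\<^sup>2 + v\<^sup>2)) (at t)" for t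
    unfolding \<phi>_def using has_real_derivative_along_line[OF has_derivative_f]
    by (auto intro!: derivative_eq_intros)
  then have "\<phi> 1 \<le> \<phi> 0"
    using slope_increase by (intro DERIV_nonpos_imp_nonincreasing[of 0 1]) force+
  then show ?thesis
    by (simp add: \<phi>_def grad_d flip: d_def)
qed

lemma descent_one_coord:
  "f (x + u *\<^sub>R axis a 1) \<le> f x + u * grad x $ a + L / 2 * u\<^sup>2"
proof -
  obtain b where "b \<noteq> a"
    using exists_other_index by blast
  then show ?thesis
    using descent_two_coords[of a b x u 0] by simp
qed

lemma L_nonneg: "0 \<le> L"
proof -
  obtain a b :: 'n where "a \<noteq> b"
    using exists_other_index by blast
  moreover have "card {k. axis a (1::real) $ k \<noteq> 0} \<le> 2"
    using card_support_scaleR_axis_add_scaleR_axis[of 1 a 0 b] by simp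
  ultimately have "sqrt ((grad 0 $ a - grad (0 + axis a 1) $ a)\<^sup>2 + (grad 0 $ b - grad (0 + axis a 1) $ b)\<^sup>2)
      \<le> L * norm (axis a (1::real))"
    using L2_const_grad unfolding L2_const_def by blast
  then have "0 \<le> L * norm (axis a (1::real))"
    by (rule order_trans[rotated]) simp
  then show ?thesis
    by simp
qed

lemma grad_eq_0_if_L_eq_0:
  assumes "L = 0"
  shows "grad x $ a = 0"
proof (rule ccontr)
  assume nz: "grad x $ a \<noteq> 0"
  obtain m where m: "\<And>y. m \<le> f y"
    using bdd_below_f by (auto simp: bdd_below_def)
  let ?u = "- (f x - m + 1) / grad x $ a"
  have "f (x + ?u *\<^sub>R axis a 1) \<le> f x + ?u * grad x $ a"
    using descent_one_coord[of x ?u a] assms by simp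
  also have "\<dots> = m - 1"
    using nz by simp
  finally show False
    using m[of "x + ?u *\<^sub>R axis a 1"] by linarith
qed


lemma lmin_le: "lmin f x i \<le> f (x + t *\<^sub>R axis i 1)"
proof -
  have "bdd_below (range (\<lambda>t. f (x + t *\<^sub>R axis i 1)))"
    using bdd_below_f by (rule bdd_below_mono) auto
  then show ?thesis
    unfolding lmin_def by (rule cINF_lower) simp
qed

lemma lmin_le_self: "lmin f x i \<le> f x"
  using lmin_le[of x i 0] by simp

lemma lmin_eq_if_is_lmin:
  assumes "is_lmin f x i t"
  shows "lmin f x i = f (x + t *\<^sub>R axis i 1)"
proof (rule antisym)
  show "lmin f x i \<le> f (x + t *\<^sub>R axis i 1)"
    by (rule lmin_le)
  show "f (x + t *\<^sub>R axis i 1) \<le> lmin f x i"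
    using assms unfolding lmin_def is_lmin_def by (intro cINF_greatest) auto
qed

lemma grad_sq_le_lmin_decrease: "(grad x $ i)\<^sup>2 \<le> 2 * L * (f x - lmin f x i)"
proof (cases "L = 0")
  case True
  then show ?thesis
    using lmin_le_self by (simp add: grad_eq_0_if_L_eq_0)
next
  case False
  then have L: "0 < L"
    using L_nonneg by simp
  let ?g = "grad x $ i"
  have "lmin f x i \<le> f (x + (- ?g / L) *\<^sub>R axis i 1)"
    by (rule lmin_le)
  also have "\<dots> \<le> f x + (- ?g / L) * ?g + L / 2 * (- ?g / L)\<^sup>2"
    by (rule descent_one_coord)
  also have "\<dots> = f x - ?g\<^sup>2 / (2 * L)"
    using L by (simp add: field_simps power2_eq_square)
  finally show ?thesis
    using L by (simp add: field_simps)
qed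

lemma grad_sq_le_swap_decrease:
  assumes "m \<noteq> i"
  shows "(grad x $ i)\<^sup>2 \<le> 2 * L * (f x - lmin f (x - (x $ m) *\<^sub>R axis m 1) i)
    - 2 * L * (x $ m * grad x $ m) + L\<^sup>2 * (x $ m)\<^sup>2"
proof (cases "L = 0")
  case True
  then show ?thesis
    by (simp add: grad_eq_0_if_L_eq_0)
next
  case False
  then have L: "0 < L"
    using L_nonneg by simp
  let ?y = "x - (x $ m) *\<^sub>R axis m 1" and ?g = "grad x $ i"
  have "lmin f ?y i \<le> f (?y + (- ?g / L) *\<^sub>R axis i 1)"
    by (rule lmin_le)
  also have "?y + (- ?g / L) *\<^sub>R axis i 1 = x + ((- x $ m) *\<^sub>R axis m 1 + (- ?g / L) *\<^sub>R axis i 1)"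
    by (simp add: algebra_simps)
  also have "f \<dots> \<le> f x + (- x $ m) * grad x $ m + (- ?g / L) * ?g + L / 2 * ((- x $ m)\<^sup>2 + (- ?g / L)\<^sup>2)"
    by (rule descent_two_coords[OF assms])
  also have "\<dots> = f x - x $ m * grad x $ m - ?g\<^sup>2 / (2 * L) + L / 2 * (x $ m)\<^sup>2"
    using L by (simp add: field_simps power2_eq_square)
  finally show ?thesis
    using L by (simp add: field_simps power2_eq_square)
qed


lemma pss_step_l0norm_le: "pss_step f grad s x x' \<Longrightarrow> l0norm x \<le> s"
  by (auto simp: pss_step_def)

lemma pss_step_below_sparsity_le_lmin:
  assumes "pss_step f grad s x x'" and "l0norm x < s"
  shows "f x' \<le> lmin f x j"
proof -
  from assms obtain i where i_min: "\<forall>j. lmin f x i \<le> lmin f x j"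
    and "(\<exists>t. is_lmin f x i t \<and> x' = x + t *\<^sub>R axis i 1) \<or> (\<not> lmin f x i < f x \<and> x' = x)"
    unfolding pss_step_def by auto
  then consider t where "is_lmin f x i t" "x' = x + t *\<^sub>R axis i 1" | "\<not> lmin f x i < f x" "x' = x"
    by blast
  then have "f x' \<le> lmin f x i"
    by cases (simp_all add: lmin_eq_if_is_lmin)
  with i_min show ?thesis
    by (meson order_trans)
qed

lemma pss_step_at_sparsity:
  assumes "pss_step f grad s x x'" and "l0norm x = s"
  obtains m i where "m \<in> I1 x" and "\<forall>j\<in>I1 x. \<bar>x $ m\<bar> \<le> \<bar>x $ j\<bar>"
    and "i \<in> I0 x" and "\<forall>j\<in>I0 x. \<bar>grad x $ j\<bar> \<le> \<bar>grad x $ i\<bar>"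
    and "\<forall>j\<in>I1 x. f x' \<le> lmin f x j" and "f x' \<le> lmin f (x - (x $ m) *\<^sub>R axis m 1) i"
proof -
  let ?y = "\<lambda>m. x - (x $ m) *\<^sub>R axis m 1"
  have "\<not> l0norm x < s"
    using assms(2) by simp
  with assms(1) obtain i1 i m where i1: "i1 \<in> I1 x" "\<forall>j\<in>I1 x. lmin f x i1 \<le> lmin f x j"
    and i: "i \<in> I0 x" "\<forall>j\<in>I0 x. \<bar>grad x $ j\<bar> \<le> \<bar>grad x $ i\<bar>"
    and m: "m \<in> I1 x" "\<forall>j\<in>I1 x. \<bar>x $ m\<bar> \<le> \<bar>x $ j\<bar>"
    and choice: "(lmin f x i1 < lmin f (?y m) i \<and> (\<exists>T. is_lmin f x i1 T \<and> x' = x + T *\<^sub>R axis i1 1))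
      \<or> (\<not> lmin f x i1 < lmin f (?y m) i \<and> (\<exists>T. is_lmin f (?y m) i T \<and> x' = ?y m + T *\<^sub>R axis i 1))"
    unfolding pss_step_def Let_def by blast
  from choice have fx': "f x' \<le> lmin f x i1 \<and> f x' \<le> lmin f (?y m) i"
    by (elim disjE conjE exE) (simp_all add: lmin_eq_if_is_lmin)
  have "\<forall>j\<in>I1 x. f x' \<le> lmin f x j"
    using fx' i1(2) by (blast intro: order_trans)
  with fx' show thesis
    by (intro that[OF m i]) auto
qed

lemma pss_step_le_lmin:
  assumes "pss_step f grad s x x'" and "l0norm x < s \<or> j \<in> I1 x"
  shows "f x' \<le> lmin f x j"
proof (cases "l0norm x < s")
  case True
  with assms(1) show ?thesis
    by (rule pss_step_below_sparsity_le_lmin)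
next
  case False
  then have "l0norm x = s"
    using pss_step_l0norm_le[OF assms(1)] by simp
  with assms show ?thesis
    by (metis False pss_step_at_sparsity)
qed

lemma pss_step_decreasing:
  assumes "pss_step f grad s x x'"
  shows "f x' \<le> f x"
proof (cases "l0norm x < s")
  case True
  then show ?thesis
    using pss_step_le_lmin[OF assms] lmin_le_self by (meson order_trans)
next
  case False
  then have "l0norm x = s"
    using pss_step_l0norm_le[OF assms] by simp
  then obtain m where "m \<in> I1 x"
    using pss_step_at_sparsity[OF assms] by metis
  then show ?thesis
    using pss_step_le_lmin[OF assms] lmin_le_self by (meson order_trans)
qed

lemma pss_step_abs_grad_le_sqrt:
  assumes "pss_step f grad s x x'" and "l0norm x < s \<or> j \<in> I1 x"
  shows "\<bar>grad x $ j\<bar> \<le> sqrt (2 * L * (f x - f x'))"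
proof -
  have "(grad x $ j)\<^sup>2 \<le> 2 * L * (f x - lmin f x j)"
    by (rule grad_sq_le_lmin_decrease)
  also have "\<dots> \<le> 2 * L * (f x - f x')"
    using pss_step_le_lmin[OF assms] L_nonneg by (intro mult_left_mono) auto
  finally show ?thesis
    using real_sqrt_le_mono by fastforce
qed


lemma pss_step_abs_grad_le:
  assumes step: "pss_step f grad s x x'" and "0 < s" and "s \<le> CARD('n)"
  shows "\<bar>grad x $ i\<bar> \<le> sqrt (2 * L * (f x - f x')) + L * (Ms s z + norm (x - z))"
proof -
  define r where "r = sqrt (2 * L * (f x - f x'))"
  define A where "A = Ms s z + norm (x - z)"
  have r: "0 \<le> r" "r\<^sup>2 = 2 * L * (f x - f x')"
    using pss_step_decreasing[OF step] L_nonneg by (simp_all add: r_def)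
  have A: "0 \<le> A"
    using Ms_nonneg[OF assms(2,3)] by (simp add: A_def)
  have "\<bar>grad x $ i\<bar> \<le> r + L * A"
  proof (cases "l0norm x < s \<or> i \<in> I1 x")
    case True
    then have "\<bar>grad x $ i\<bar> \<le> r"
      unfolding r_def by (rule pss_step_abs_grad_le_sqrt[OF step])
    then show ?thesis
      using L_nonneg A by (meson add_increasing2 mult_nonneg_nonneg)
  next
    case False
    then have "l0norm x = s" and "i \<in> I0 x"
      using pss_step_l0norm_le[OF step] by (auto simp: I1_def I0_def)
    then obtain m k where m: "m \<in> I1 x" "\<forall>j\<in>I1 x. \<bar>x $ m\<bar> \<le> \<bar>x $ j\<bar>"
      and k: "k \<in> I0 x" "\<forall>j\<in>I0 x. \<bar>grad x $ j\<bar> \<le> \<bar>grad x $ k\<bar>"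
      and swap: "f x' \<le> lmin f (x - (x $ m) *\<^sub>R axis m 1) k"
      using pss_step_at_sparsity[OF step] by metis
    have "m \<noteq> k"
      using m(1) k(1) by (auto simp: I1_def I0_def)
    have gm: "\<bar>grad x $ m\<bar> \<le> r"
      unfolding r_def using step m(1) by (intro pss_step_abs_grad_le_sqrt) auto
    have xm: "\<bar>x $ m\<bar> \<le> A"
      unfolding A_def using assms(2) \<open>l0norm x = s\<close> m(2) by (rule abs_le_Ms_if_abs_le_support)
    have "(grad x $ i)\<^sup>2 \<le> (grad x $ k)\<^sup>2"
      using k(2) \<open>i \<in> I0 x\<close> abs_le_square_iff by blast
    also have "\<dots> \<le> 2 * L * (f x - f x') - 2 * L * (x $ m * grad x $ m) + L\<^sup>2 * (x $ m)\<^sup>2"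
      using grad_sq_le_swap_decrease[OF \<open>m \<noteq> k\<close>, of x]
        mult_left_mono[OF diff_left_mono[OF swap], of "2 * L" "f x"] L_nonneg
      by linarith
    also have "\<dots> \<le> r\<^sup>2 + 2 * L * (\<bar>x $ m\<bar> * \<bar>grad x $ m\<bar>) + L\<^sup>2 * (x $ m)\<^sup>2"
      using r(2) mult_left_mono[OF abs_ge_minus_self L_nonneg, of "x $ m * grad x $ m"]
      by (simp add: abs_mult)
    also have "\<dots> \<le> r\<^sup>2 + 2 * L * (A * r) + L\<^sup>2 * A\<^sup>2"
    proof -
      have "\<bar>x $ m\<bar> * \<bar>grad x $ m\<bar> \<le> A * r"
        using xm gm A by (intro mult_mono) auto
      moreover have "(x $ m)\<^sup>2 \<le> A\<^sup>2"
        using xm abs_le_square_iff[of "x $ m" A] A by simp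
      ultimately show ?thesis
        using L_nonneg by (intro add_mono mult_left_mono order_refl) auto
    qed
    also have "\<dots> = (r + L * A)\<^sup>2"
      by (simp add: power2_eq_square algebra_simps)
    finally have "\<bar>grad x $ i\<bar> \<le> \<bar>r + L * A\<bar>"
      by (simp only: abs_le_square_iff)
    then show ?thesis
      using r(1) A L_nonneg by simp
  qed
  then show ?thesis
    by (simp add: r_def A_def)
qed

lemma pss_sequence_gap_tendsto_0:
  assumes "pss_sequence f grad s xs"
  shows "(\<lambda>k. f (xs k) - f (xs (Suc k))) \<longlonglongrightarrow> 0"
proof -
  have "f (xs (Suc k)) \<le> f (xs k)" for k
    using assms pss_step_decreasing unfolding pss_sequence_def by blast
  then have "decseq (\<lambda>k. f (xs k))"
    by (rule decseq_SucI)
  moreover obtain B where "\<forall>k. B \<le> f (xs k)"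
    using bdd_below_f by (meson bdd_below.E rangeI)
  ultimately obtain l where "(\<lambda>k. f (xs k)) \<longlonglongrightarrow> l"
    using decseq_convergent by metis
  then show ?thesis
    by (rule LIMSEQ_imp_diff_Suc_tendsto_0)
qed

end

theorem theorem3p4:
  fixes f :: "real^'n \<Rightarrow> real" and grad :: "real^'n \<Rightarrow> real^'n"
    and s :: nat and xs :: "nat \<Rightarrow> real^'n" and xstar :: "real^'n" and L2 :: real
  assumes deriv: "\<And>x. (f has_derivative (\<lambda>h. grad x \<bullet> h)) (at x)"
    and cont: "continuous_on UNIV grad"
    and bdd: "\<exists>m. \<forall>x. m \<le> f x"
    and lip: "\<exists>L. \<forall>x y. norm (grad x - grad y) \<le> L * norm (x - y)"
    and s_pos: "0 < s" and s_lt: "s < CARD('n)"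
    and attained: "\<And>x i. \<exists>t. is_lmin f x i t"
    and L2: "L2_const grad L2"
    and seq: "pss_sequence f grad s xs"
    and acc: "\<exists>r. strict_mono r \<and> (xs \<circ> r) \<longlonglongrightarrow> xstar"
  shows "(\<forall>i\<in>I1 xstar. grad xstar $ i = 0) \<and>
         (\<forall>i\<in>I0 xstar. \<bar>grad xstar $ i\<bar> \<le> L2 * Ms s xstar)"
proof -
  interpret block_lipschitz_gradient f grad L2
    using deriv L2 bdd s_pos s_lt by unfold_locales (auto simp: bdd_below_def)
  obtain r where "strict_mono r" and "(xs \<circ> r) \<longlonglongrightarrow> xstar"
    using acc by blast
  then have xr: "(\<lambda>j. xs (r j)) \<longlonglongrightarrow> xstar"
    by (simp add: o_def)
  have gap: "(\<lambda>j. f (xs (r j)) - f (xs (Suc (r j)))) \<longlonglongrightarrow> 0"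
    using LIMSEQ_subseq_LIMSEQ[OF pss_sequence_gap_tendsto_0[OF seq] \<open>strict_mono r\<close>]
    by (simp add: o_def)
  have step: "pss_step f grad s (xs (r j)) (xs (Suc (r j)))" for j
    using seq by (simp add: pss_sequence_def)
  have grad_r: "(\<lambda>j. \<bar>grad (xs (r j)) $ i\<bar>) \<longlonglongrightarrow> \<bar>grad xstar $ i\<bar>" for i
    using cont xr by (intro tendsto_intros isCont_tendsto_compose[of xstar grad]) (simp_all add: continuous_on_eq_continuous_at)
  have "grad xstar $ i = 0" if "i \<in> I1 xstar" for i
  proof -
    have "eventually (\<lambda>j. xs (r j) $ i \<noteq> 0) sequentially"
      using that tendsto_vec_nth[OF xr] by (intro tendsto_imp_eventually_ne) (auto simp: I1_def)
    then have bound: "eventually (\<lambda>j. \<bar>grad (xs (r j)) $ i\<bar> \<le> sqrt (2 * L2 * (f (xs (r j)) - f (xs (Suc (r j)))))) sequentially"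
      by (rule eventually_mono) (intro pss_step_abs_grad_le_sqrt[OF step], simp add: I1_def)
    have "(\<lambda>j. sqrt (2 * L2 * (f (xs (r j)) - f (xs (Suc (r j)))))) \<longlonglongrightarrow> sqrt (2 * L2 * 0)"
      by (intro tendsto_intros gap)
    from tendsto_le[OF trivial_limit_sequentially this grad_r bound]
    show ?thesis
      by simp
  qed
  moreover have "\<bar>grad xstar $ i\<bar> \<le> L2 * Ms s xstar" for i
  proof -
    have "(\<lambda>j. sqrt (2 * L2 * (f (xs (r j)) - f (xs (Suc (r j))))) + L2 * (Ms s xstar + norm (xs (r j) - xstar)))
        \<longlonglongrightarrow> sqrt (2 * L2 * 0) + L2 * (Ms s xstar + norm (xstar - xstar))"
      by (intro tendsto_intros gap xr)
    from tendsto_le[OF trivial_limit_sequentially this grad_r]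
    show ?thesis
      using pss_step_abs_grad_le[OF step s_pos] s_lt by simp
  qed
  ultimately show ?thesis
    by blast
qed

end
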